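(* Let $G$ be a group, $f:G\to G$ an endomorphism, and $x_0\in G$ such that $f^2(x)=x_0^{-1}f(x)x_0$ for all $x\in G$. Put $x_i=f^i(x_0)$ for $i>0$. If there exist $k\ge1$ and $i\ge0$ with $x_i^k\in\mathrm{im}(f^{i+1})$, then there exist $n\ge1$, an endomorphism $g:G\to G$ with $g\circ g=g$, and $c\in G$ such that $g(x)=c\,f^n(x)\,c^{-1}$ for all $x\in G$ (i.e. some power of $f$ is conjugate to an idempotent endomorphism). *)

theory Defs
  imports "HOL-Algebra.Group"
begin

end

theory Submission
  imports Defs
begin

text \<open>
  Write the hypothesis as \<open>f (f x) = inv y \<otimes> f x \<otimes> y\<close> with \<open>y = x\<^sub>0\<close>. Then \<open>f ^^ Suc i\<close>
  is \<open>f\<close> followed by conjugation with \<open>y [^] i\<close>, so it has the same fibres as \<open>f\<close>, and the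
  hypothesis on \<open>x\<^sub>i\<close> becomes \<open>f y [^] k \<in> f ` f ` G\<close>. Computing \<open>f (f (f z))\<close> in two
  ways shows that \<open>y\<close> and \<open>f y\<close> induce the same conjugation on \<open>f ` f ` G\<close>; consequently
  \<open>y \<otimes> f y \<otimes> inv y\<close> satisfies the same relation as \<open>y\<close>, and its \<open>k\<close>-th power lies in
  \<open>f ` G\<close>. So we may assume \<open>y [^] k \<in> f ` G\<close>. Conjugation by \<open>inv y\<close> maps \<open>f ` G\<close> into
  itself by the relation, hence so does conjugation by \<open>y\<close>, which is \<open>y [^] k\<close> times a power
  of \<open>inv y\<close>; therefore \<open>f ` G = f ` f ` G\<close>. Now \<open>y\<close> and \<open>f y\<close> induce the same
  conjugation on all of \<open>f ` G\<close>, which is exactly the idempotence of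
  \<open>x \<mapsto> y \<otimes> f x \<otimes> inv y\<close>. Thus \<open>n = 1\<close> already works.
\<close>

context group begin

lemma inv_mult_cancel_left [simp]:
  "x \<in> carrier G \<Longrightarrow> y \<in> carrier G \<Longrightarrow> inv x \<otimes> (x \<otimes> y) = y"
  by (simp add: m_assoc [symmetric])

lemma mult_inv_cancel_left [simp]:
  "x \<in> carrier G \<Longrightarrow> y \<in> carrier G \<Longrightarrow> x \<otimes> (inv x \<otimes> y) = y"
  by (simp add: m_assoc [symmetric])

lemma conj_nat_pow:
  assumes "a \<in> carrier G" "b \<in> carrier G"
  shows "(a \<otimes> b \<otimes> inv a) [^] (n::nat) = a \<otimes> b [^] n \<otimes> inv a"
  by (induction n) (simp_all add: assms m_assoc)

lemma conj_comp_hom: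
  assumes "h \<in> hom G G" "a \<in> carrier G"
  shows "(\<lambda>x. a \<otimes> h x \<otimes> inv a) \<in> hom G G"
  using assms by (intro homI) (simp_all add: hom_in_carrier hom_mult m_assoc)

end

locale square_conj_endo = group_hom G G f for G (structure) and f +
  fixes y
  assumes y_closed [simp]: "y \<in> carrier G"
    and square_eq: "x \<in> carrier G \<Longrightarrow> f (f x) = inv y \<otimes> f x \<otimes> y"
begin

lemma funpow_closed [simp]: "x \<in> carrier G \<Longrightarrow> (f ^^ i) x \<in> carrier G"
  by (induction i) simp_all

lemma funpow_nat_pow: "x \<in> carrier G \<Longrightarrow> (f ^^ i) (x [^] (k::nat)) = (f ^^ i) x [^] k"
  by (induction i) (simp_all add: hom_nat_pow)

lemma funpow_Suc_eq: "x \<in> carrier G \<Longrightarrow> (f ^^ Suc i) x = inv (y [^] i) \<otimes> f x \<otimes> y [^] i"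
proof (induction i arbitrary: x)
  case 0
  then show ?case by simp
next
  case (Suc i)
  then have "(f ^^ Suc (Suc i)) x = inv (y [^] i) \<otimes> f (f x) \<otimes> y [^] i"
    by (simp only: funpow_Suc_right o_apply hom_closed)
  also have "\<dots> = inv (y [^] Suc i) \<otimes> f x \<otimes> y [^] Suc i"
    using Suc.prems unfolding nat_pow_Suc2 [OF y_closed]
    by (simp add: square_eq inv_mult_group m_assoc)
  finally show ?case .
qed

lemma funpow_Suc_eq_iff:
  "a \<in> carrier G \<Longrightarrow> b \<in> carrier G \<Longrightarrow> (f ^^ Suc i) a = (f ^^ Suc i) b \<longleftrightarrow> f a = f b"
  by (simp add: funpow_Suc_eq m_assoc del: funpow.simps)

lemma conj_by_hom_eq_on_square_image:
  assumes z: "z \<in> carrier G"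
  shows "inv (f y) \<otimes> f (f z) \<otimes> f y = inv y \<otimes> f (f z) \<otimes> y"
proof -
  have "inv (f y) \<otimes> f (f z) \<otimes> f y = f (inv y \<otimes> f z \<otimes> y)"
    using z by simp
  also have "\<dots> = f (f (f z))" by (simp only: square_eq [OF z])
  also have "\<dots> = inv y \<otimes> f (f z) \<otimes> y" using z by (intro square_eq) simp
  finally show ?thesis .
qed

lemma square_conj_endo_shift: "square_conj_endo G f (y \<otimes> f y \<otimes> inv y)"
proof unfold_locales
  show "y \<otimes> f y \<otimes> inv y \<in> carrier G" by simp
next
  fix x assume x: "x \<in> carrier G"
  have "inv (y \<otimes> f y \<otimes> inv y) \<otimes> f x \<otimes> (y \<otimes> f y \<otimes> inv y)
      = y \<otimes> (inv (f y) \<otimes> (inv y \<otimes> f x \<otimes> y) \<otimes> f y) \<otimes> inv y"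
    using x by (simp add: inv_mult_group m_assoc)
  also have "\<dots> = y \<otimes> (inv y \<otimes> (inv y \<otimes> f x \<otimes> y) \<otimes> y) \<otimes> inv y"
    using conj_by_hom_eq_on_square_image [OF x] by (simp only: square_eq [OF x])
  also have "\<dots> = f (f x)"
    using x by (simp add: square_eq m_assoc)
  finally show "f (f x) = inv (y \<otimes> f y \<otimes> inv y) \<otimes> f x \<otimes> (y \<otimes> f y \<otimes> inv y)" ..
qed

lemma shift_nat_pow_in_image:
  fixes k :: nat
  assumes "(f ^^ i) y [^] k \<in> (f ^^ Suc i) ` carrier G"
  shows "(y \<otimes> f y \<otimes> inv y) [^] k \<in> f ` carrier G"
proof -
  obtain w where w: "w \<in> carrier G" "(f ^^ i) y [^] k = (f ^^ Suc i) w"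
    using assms by blast
  then have "(f ^^ i) (y [^] k) = (f ^^ i) (f w)"
    by (simp add: funpow_nat_pow funpow_Suc_right del: funpow.simps)
  then have "(f ^^ Suc i) (y [^] k) = (f ^^ Suc i) (f w)"
    by simp
  then have "f (y [^] k) = f (f w)"
    using w by (simp add: funpow_Suc_eq_iff del: funpow.simps)
  then have "f y [^] k = inv y \<otimes> f w \<otimes> y"
    using w by (simp add: hom_nat_pow square_eq)
  moreover have "(y \<otimes> f y \<otimes> inv y) [^] k = y \<otimes> f y [^] k \<otimes> inv y"
    by (rule conj_nat_pow) simp_all
  ultimately have "(y \<otimes> f y \<otimes> inv y) [^] k = f w"
    using w by (simp add: m_assoc)
  with w show ?thesis by blast
qed

context
  fixes k :: nat
  assumes k_pos: "1 \<le> k" and nat_pow_in_image: "y [^] k \<in> f ` carrier G"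
begin

lemma conj_image_closed:
  assumes "t \<in> f ` carrier G"
  shows "y \<otimes> t \<otimes> inv y \<in> f ` carrier G"
proof -
  interpret image: subgroup "f ` carrier G" G by (rule img_is_subgroup)
  obtain z where z: "z \<in> carrier G" "t = f z" using assms by blast
  obtain j where k: "k = Suc j" using k_pos by (cases k) auto
  have "y \<otimes> t \<otimes> inv y = y [^] k \<otimes> (inv (y [^] j) \<otimes> f z \<otimes> y [^] j) \<otimes> inv (y [^] k)"
    using z unfolding k nat_pow_Suc2 [OF y_closed] by (simp add: inv_mult_group m_assoc)
  also have "inv (y [^] j) \<otimes> f z \<otimes> y [^] j = f ((f ^^ j) z)"
    using funpow_Suc_eq [OF z(1), of j] by simp
  finally show ?thesis
    using z nat_pow_in_image by simp
qed

lemma image_eq_square_image: "f ` carrier G = (f \<circ> f) ` carrier G"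
proof
  show "f ` carrier G \<subseteq> (f \<circ> f) ` carrier G"
  proof
    fix t assume t: "t \<in> f ` carrier G"
    then obtain z where z: "z \<in> carrier G" "y \<otimes> t \<otimes> inv y = f z"
      using conj_image_closed by blast
    from t have "t = inv y \<otimes> (y \<otimes> t \<otimes> inv y) \<otimes> y"
      by (auto simp: m_assoc)
    also have "\<dots> = f (f z)"
      using z by (simp add: square_eq)
    finally have "t = f (f z)" .
    with z show "t \<in> (f \<circ> f) ` carrier G" by auto
  qed
qed auto

lemma conj_by_hom_eq_on_image:
  "t \<in> f ` carrier G \<Longrightarrow> inv (f y) \<otimes> t \<otimes> f y = inv y \<otimes> t \<otimes> y"
  using conj_by_hom_eq_on_square_image by (auto simp: image_eq_square_image)

lemma conj_comp_idem:
  assumes x: "x \<in> carrier G"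
  shows "y \<otimes> f (y \<otimes> f x \<otimes> inv y) \<otimes> inv y = y \<otimes> f x \<otimes> inv y"
proof -
  have "y \<otimes> f (y \<otimes> f x \<otimes> inv y) \<otimes> inv y
      = y \<otimes> (f y \<otimes> (inv y \<otimes> f x \<otimes> y) \<otimes> inv (f y)) \<otimes> inv y"
    using x by (simp add: square_eq m_assoc)
  also have "inv y \<otimes> f x \<otimes> y = inv (f y) \<otimes> f x \<otimes> f y"
    using x by (simp add: conj_by_hom_eq_on_image)
  also have "f y \<otimes> (inv (f y) \<otimes> f x \<otimes> f y) \<otimes> inv (f y) = f x"
    using x by (simp add: m_assoc)
  finally show ?thesis .
qed

end

end

theorem corollary3p6:
  fixes G (structure) and f :: "'a \<Rightarrow> 'a" and x0 :: 'a
  assumes "group G"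
    and "f \<in> hom G G"
    and "x0 \<in> carrier G"
    and "\<And>x. x \<in> carrier G \<Longrightarrow> f (f x) = inv x0 \<otimes> f x \<otimes> x0"
    and "\<exists>k::nat. \<exists>i::nat. k \<ge> 1 \<and>
           ((f ^^ i) x0) [^] k \<in> (f ^^ (Suc i)) ` carrier G"
  shows "\<exists>n::nat. \<exists>g c. n \<ge> 1 \<and> g \<in> hom G G \<and>
           (\<forall>x\<in>carrier G. g (g x) = g x) \<and> c \<in> carrier G \<and>
           (\<forall>x\<in>carrier G. g x = c \<otimes> (f ^^ n) x \<otimes> inv c)"
proof -
  interpret square_conj_endo G f x0
    using assms by (simp add: square_conj_endo_def square_conj_endo_axioms_def
        group_hom_def group_hom_axioms_def)
  define y where "y = x0 \<otimes> f x0 \<otimes> inv x0"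
  interpret shifted: square_conj_endo G f y
    unfolding y_def by (rule square_conj_endo_shift)
  obtain k i :: nat where k: "1 \<le> k" and pow: "(f ^^ i) x0 [^] k \<in> (f ^^ Suc i) ` carrier G"
    using assms(5) by blast
  from pow have "y [^] k \<in> f ` carrier G"
    unfolding y_def by (rule shift_nat_pow_in_image)
  then have "\<forall>x\<in>carrier G. y \<otimes> f (y \<otimes> f x \<otimes> inv y) \<otimes> inv y = y \<otimes> f x \<otimes> inv y"
    using shifted.conj_comp_idem [OF k] by blast
  moreover have "(\<lambda>x. y \<otimes> f x \<otimes> inv y) \<in> hom G G"
    using assms(2) by (rule conj_comp_hom) simp
  ultimately show ?thesis
    by (intro exI [of _ 1] exI [of _ "\<lambda>x. y \<otimes> f x \<otimes> inv y"] exI [of _ y]) simp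
qed

end
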